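(* Let $A=\mathbb{C}[x,y,z]$, let $s,t\in A\setminus\{0\}$ be coprime and equip $A$ with the Poisson bracket $\{x,y\}=t s_z-s t_z$, $\{y,z\}=t s_x-s t_x$, $\{z,x\}=t s_y-s t_y$. Let $p=(\alpha,\beta,\gamma)\in\mathbb{C}^3$ and $M=\langle x-\alpha,y-\beta,z-\gamma\rangle$. Then $M$ is a Poisson ideal if and only if either (1) $p$ is a common zero of $s$ and $t$, or (2) $p$ is a singular point of $f_{\lambda,\mu}:=\lambda s-\mu t$ for some $(\lambda,\mu)\in\mathbb{P}^1(\mathbb{C})$.
   Context: Subscripts denote partial derivatives. $p$ is a singular point of $f$ means $f(p)=f_x(p)=f_y(p)=f_z(p)=0$. An ideal $I$ is Poisson if $\{a,I\}\subseteq I$ for all $a\in A$. *)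

theory Defs
  imports Complex_Main "HOL-Computational_Algebra.Polynomial"
begin

text \<open>We model A = C[x,y,z] as the iterated polynomial ring C[x][y][z]:
  type complex poly poly poly, innermost variable x, middle y, outermost z.\<close>

type_synonym cpoly3 = "complex poly poly poly"

definition Xv :: cpoly3 where "Xv = [:[:[:0, 1:]:]:]"
definition Yv :: cpoly3 where "Yv = [:[:0, 1:]:]"
definition Zv :: cpoly3 where "Zv = [:0, 1:]"
definition cst :: "complex \<Rightarrow> cpoly3" where "cst c = [:[:[:c:]:]:]"

definition dx :: "cpoly3 \<Rightarrow> cpoly3" where "dx f = map_poly (map_poly pderiv) f"
definition dy :: "cpoly3 \<Rightarrow> cpoly3" where "dy f = map_poly pderiv f"
definition dz :: "cpoly3 \<Rightarrow> cpoly3" where "dz f = pderiv f"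

definition eval3 :: "cpoly3 \<Rightarrow> complex \<Rightarrow> complex \<Rightarrow> complex \<Rightarrow> complex" where
  "eval3 f a b c = poly (poly (poly f [:[:c:]:]) [:b:]) a"

definition singular_point :: "cpoly3 \<Rightarrow> complex \<Rightarrow> complex \<Rightarrow> complex \<Rightarrow> bool" where
  "singular_point f a b c \<longleftrightarrow>
     eval3 f a b c = 0 \<and> eval3 (dx f) a b c = 0 \<and> eval3 (dy f) a b c = 0 \<and> eval3 (dz f) a b c = 0"

text \<open>The Poisson bracket on A determined (as a biderivation) by
  {x,y} = t s_z - s t_z, {y,z} = t s_x - s t_x, {z,x} = t s_y - s t_y.\<close>
definition pbr :: "cpoly3 \<Rightarrow> cpoly3 \<Rightarrow> cpoly3 \<Rightarrow> cpoly3 \<Rightarrow> cpoly3" where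
  "pbr s t a b =
     (t * dz s - s * dz t) * (dx a * dy b - dy a * dx b)
   + (t * dx s - s * dx t) * (dy a * dz b - dz a * dy b)
   + (t * dy s - s * dy t) * (dz a * dx b - dx a * dz b)"

definition poisson_ideal :: "cpoly3 \<Rightarrow> cpoly3 \<Rightarrow> cpoly3 set \<Rightarrow> bool" where
  "poisson_ideal s t I \<longleftrightarrow> (\<forall>a b. b \<in> I \<longrightarrow> pbr s t a b \<in> I)"

definition max_ideal :: "complex \<Rightarrow> complex \<Rightarrow> complex \<Rightarrow> cpoly3 set" where
  "max_ideal a b c = {u * (Xv - cst a) + v * (Yv - cst b) + w * (Zv - cst c) | u v w. True}"

end

theory Submission
  imports Defs
begin

text \<open>Evaluation at \<open>p\<close> is a ring homomorphism whose kernel is \<open>M\<close>, and the bracket of two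
  polynomials evaluated at \<open>p\<close> only involves the values at \<open>p\<close> of the three coefficients
  \<open>t s\<^sub>i - s t\<^sub>i\<close>. Hence \<open>M\<close> is Poisson iff the vectors \<open>(s(p), t(p))\<close> and \<open>(s\<^sub>i(p), t\<^sub>i(p))\<close>
  are linearly dependent for \<open>i = x, y, z\<close>. If \<open>(s(p), t(p)) \<noteq> 0\<close>, this says exactly that
  \<open>f = t(p) s - s(p) t\<close> is singular at \<open>p\<close>; conversely a singular pencil member gives the
  dependence directly.\<close>

lemma eval3_simps [simp]:
  "eval3 (f + g) a b c = eval3 f a b c + eval3 g a b c"
  "eval3 (f - g) a b c = eval3 f a b c - eval3 g a b c"
  "eval3 (f * g) a b c = eval3 f a b c * eval3 g a b c"
  "eval3 (cst l) a b c = l"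
  "eval3 Xv a b c = a" "eval3 Yv a b c = b" "eval3 Zv a b c = c"
  by (simp_all add: eval3_def cst_def Xv_def Yv_def Zv_def)

lemma partial_derivative_coordinates [simp]:
  "dx Xv = 1" "dy Xv = 0" "dz Xv = 0"
  "dx Yv = 0" "dy Yv = 1" "dz Yv = 0"
  "dx Zv = 0" "dy Zv = 0" "dz Zv = 1"
  "dx (cst l) = 0" "dy (cst l) = 0" "dz (cst l) = 0"
  by (simp_all add: dx_def dy_def dz_def Xv_def Yv_def Zv_def cst_def map_poly_pCons
      pderiv_pCons one_pCons)

lemma partial_derivative_diff [simp]:
  "dx (f - g) = dx f - dx g" "dy (f - g) = dy f - dy g" "dz (f - g) = dz f - dz g"
  by (simp_all add: dx_def dy_def dz_def poly_eq_iff coeff_map_poly pderiv_diff)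

lemma partial_derivative_cst_mult [simp]:
  "dx (cst l * f) = cst l * dx f" "dy (cst l * f) = cst l * dy f" "dz (cst l * f) = cst l * dz f"
  by (simp_all add: dx_def dy_def dz_def poly_eq_iff coeff_map_poly pderiv_smult cst_def)

text \<open>Dividing successively by \<open>z - \<gamma>\<close>, \<open>y - \<beta>\<close> and \<open>x - \<alpha>\<close> (synthetic division in each
  variable) leaves the constant remainder \<open>f(\<alpha>, \<beta>, \<gamma>)\<close>.\<close>
lemma eval3_eq_0_imp_mem_max_ideal:
  assumes "eval3 f a b c = 0"
  shows "f \<in> max_ideal a b c"
proof -
  define g where "g = poly f [:[:c:]:]"
  define h where "h = poly g [:b:]"
  have f: "f = [:-[:[:c:]:], 1:] * synthetic_div f [:[:c:]:] + [:g:]"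
    unfolding g_def by (rule synthetic_div_correct'[symmetric])
  have g: "g = [:-[:b:], 1:] * synthetic_div g [:b:] + [:h:]"
    unfolding h_def by (rule synthetic_div_correct'[symmetric])
  have h: "h = [:-a, 1:] * synthetic_div h a + [:poly h a:]"
    by (rule synthetic_div_correct'[symmetric])
  have "poly h a = 0"
    using assms by (simp add: eval3_def h_def g_def)
  with h have h': "[:h:] = [:[:-a, 1:] * synthetic_div h a:]"
    by simp
  have g': "[:g:] = [:[:-[:b:], 1:] * synthetic_div g [:b:]:] + [:[:h:]:]"
  proof -
    have "[:x + y:] = [:x:] + [:y:]" for x y :: "complex poly poly"
      by simp
    then show ?thesis
      using arg_cong[OF g, of "\<lambda>p. [:p:]"] by metis
  qed
  have "f = [:[:synthetic_div h a:]:] * (Xv - cst a) + [:synthetic_div g [:b:]:] * (Yv - cst b)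
       + synthetic_div f [:[:c:]:] * (Zv - cst c)"
    by (subst f, subst g', subst h') (simp add: Xv_def Yv_def Zv_def cst_def algebra_simps)
  then show ?thesis
    unfolding max_ideal_def by blast
qed

lemma mem_max_ideal_iff: "f \<in> max_ideal a b c \<longleftrightarrow> eval3 f a b c = 0"
  using eval3_eq_0_imp_mem_max_ideal unfolding max_ideal_def by auto

lemma poisson_max_ideal_iff:
  "poisson_ideal s t (max_ideal a b c) \<longleftrightarrow>
     (\<forall>D \<in> {dx, dy, dz}. eval3 t a b c * eval3 (D s) a b c = eval3 s a b c * eval3 (D t) a b c)"
    (is "_ \<longleftrightarrow> ?dependent")
proof
  assume "poisson_ideal s t (max_ideal a b c)"
  moreover have "Xv - cst a \<in> max_ideal a b c" "Yv - cst b \<in> max_ideal a b c"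
    by (simp_all add: mem_max_ideal_iff)
  ultimately have "eval3 (pbr s t Yv (Xv - cst a)) a b c = 0"
    "eval3 (pbr s t Zv (Xv - cst a)) a b c = 0" "eval3 (pbr s t Zv (Yv - cst b)) a b c = 0"
    by (simp_all add: poisson_ideal_def flip: mem_max_ideal_iff)
  then show ?dependent
    by (simp add: pbr_def)
next
  assume ?dependent
  then show "poisson_ideal s t (max_ideal a b c)"
    by (simp add: poisson_ideal_def mem_max_ideal_iff pbr_def)
qed

lemma pencil_member_vanishes_iff:
  fixes a0 b0 :: "'a::field" and a b :: "'i \<Rightarrow> 'a"
  shows "(a0 = 0 \<and> b0 = 0) \<or> (\<exists>l m. (l, m) \<noteq> (0, 0) \<and> l * a0 = m * b0 \<and> (\<forall>i \<in> I. l * a i = m * b i))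
     \<longleftrightarrow> (\<forall>i \<in> I. b0 * a i = a0 * b i)"
proof
  assume "(a0 = 0 \<and> b0 = 0) \<or> (\<exists>l m. (l, m) \<noteq> (0, 0) \<and> l * a0 = m * b0 \<and> (\<forall>i \<in> I. l * a i = m * b i))"
  then show "\<forall>i \<in> I. b0 * a i = a0 * b i"
  proof (elim disjE exE conjE)
    fix l m assume lm: "(l, m) \<noteq> (0, 0)" "l * a0 = m * b0" "\<forall>i \<in> I. l * a i = m * b i"
    show ?thesis
    proof (cases "l = 0")
      case True
      with lm show ?thesis by auto
    next
      case False
      have "l * (b0 * a i - a0 * b i) = b0 * (l * a i - m * b i) - b i * (l * a0 - m * b0)" for i
        by (simp add: algebra_simps)
      then have "l * (b0 * a i - a0 * b i) = 0" if "i \<in> I" for i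
        using lm that by simp
      with False show ?thesis by simp
    qed
  qed simp
next
  assume "\<forall>i \<in> I. b0 * a i = a0 * b i"
  then show "(a0 = 0 \<and> b0 = 0) \<or> (\<exists>l m. (l, m) \<noteq> (0, 0) \<and> l * a0 = m * b0 \<and> (\<forall>i \<in> I. l * a i = m * b i))"
  proof (cases "a0 = 0 \<and> b0 = 0")
    case False
    then have "(b0, a0) \<noteq> (0, 0) \<and> b0 * a0 = a0 * b0 \<and> (\<forall>i \<in> I. b0 * a i = a0 * b i)"
      using \<open>\<forall>i \<in> I. b0 * a i = a0 * b i\<close> by auto
    then show ?thesis
      by blast
  qed simp
qed

theorem lemma3p5:
  fixes s t :: cpoly3 and \<alpha> \<beta> \<gamma> :: complex
  assumes "s \<noteq> 0" and "t \<noteq> 0" and "coprime s t"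
  shows "poisson_ideal s t (max_ideal \<alpha> \<beta> \<gamma>) \<longleftrightarrow>
    ((eval3 s \<alpha> \<beta> \<gamma> = 0 \<and> eval3 t \<alpha> \<beta> \<gamma> = 0) \<or>
     (\<exists>l m. (l, m) \<noteq> (0, 0) \<and>
        singular_point (cst l * s - cst m * t) \<alpha> \<beta> \<gamma>))"
proof -
  \<comment> \<open>The hypotheses on \<open>s\<close> and \<open>t\<close> are only needed for the bracket to be a Poisson
    bracket; the characterisation itself holds for all \<open>s\<close>, \<open>t\<close>.\<close>
  let ?e = "\<lambda>f. eval3 f \<alpha> \<beta> \<gamma>"
  have "singular_point (cst l * s - cst m * t) \<alpha> \<beta> \<gamma> \<longleftrightarrow>
      l * ?e s = m * ?e t \<and> (\<forall>D \<in> {dx, dy, dz}. l * ?e (D s) = m * ?e (D t))" for l m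
    by (simp add: singular_point_def)
  then show ?thesis
    unfolding poisson_max_ideal_iff
    using pencil_member_vanishes_iff[of "?e s" "?e t" "{dx, dy, dz}" "\<lambda>D. ?e (D s)" "\<lambda>D. ?e (D t)"]
    by simp
qed

end
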